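(* Let $|q|<1$, let $x,y$ be complex numbers and let $n,m\ge 0$ be integers. Then $$h_n(x,y|q)\,h_m(x,y|q)=\sum_{l=0}^{\min\{m,n\}}\sum_{k=0}^{\min\{m,n\}}{m\brack l}{n\brack l}{m-l\brack k}{n-l\brack k}(q;q)_k(q;q)_l(-1)^k x^l y^k q^{\binom{k}{2}}\,h_{n+m-2l-k}(x,y|q).$$
   Context: Throughout $|q|<1$. $(a;q)_n=\prod_{j=0}^{n-1}(1-aq^j)$, ${n\brack k}=\frac{(q;q)_n}{(q;q)_k(q;q)_{n-k}}$ for $0\le k\le n$ and ${n\brack k}=0$ for $k>n$. $P_n(x,y)=(x-y)(x-qy)\cdots(x-q^{n-1}y)$ with $P_0=1$, and $h_n(x,y|q)=\sum_{k=0}^n{n\brack k}P_k(x,y)$. *)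

theory Defs
  imports "HOL-Analysis.Analysis"
begin

definition qpoch :: "complex \<Rightarrow> complex \<Rightarrow> nat \<Rightarrow> complex" where
  "qpoch a q n = (\<Prod>j<n. (1 - a * q ^ j))"

definition qbinom :: "complex \<Rightarrow> nat \<Rightarrow> nat \<Rightarrow> complex" where
  "qbinom q n k = (if k \<le> n then qpoch q q n / (qpoch q q k * qpoch q q (n - k)) else 0)"

definition Pq :: "complex \<Rightarrow> nat \<Rightarrow> complex \<Rightarrow> complex \<Rightarrow> complex" where
  "Pq q n x y = (\<Prod>j<n. (x - q ^ j * y))"

definition hq :: "complex \<Rightarrow> nat \<Rightarrow> complex \<Rightarrow> complex \<Rightarrow> complex" where
  "hq q n x y = (\<Sum>k=0..n. qbinom q n k * Pq q k x y)"

end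

(*
  Both sides, as functions of m, satisfy the three-term recurrence
    h_(m+1) = (1 + x - y q^m) h_m - x (1 - q^m) h_(m-1)
  of the polynomials h_m (a consequence of the q-Pascal rule), and they agree at m = 0.
  For the right-hand side, with (q;q)_m (q;q)_n pulled out, the recurrence follows by
  shifting the summation indices l and k by one; this reduces it to a recurrence for
  the coefficients, which is a polynomial identity in powers of q.  Indexing the
  coefficients by integers and reading 1/(q;q)_j as 0 for j < 0 makes the boundary
  terms of these shifts vanish automatically.  The hypothesis |q| < 1 is
  only used to ensure that q is not a root of unity, so that no (q;q)_j vanishes.
*)
theory Submission
  imports Defs
begin

lemma sum_int_shift_pred:
  fixes f :: "int \<Rightarrow> 'a::comm_monoid_add"
  assumes "f (-1) = 0" and "f R = 0"
  shows "(\<Sum>l=0..R. f (l - 1)) = (\<Sum>l=0..R. f l)"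
proof -
  have "(\<Sum>l=0..R. f (l - 1)) = (\<Sum>l=-1..R - 1. f l)"
    by (rule sum.reindex_bij_witness[of _ "\<lambda>l. l + 1" "\<lambda>l. l - 1"]) auto
  also have "\<dots> = (\<Sum>l=-1..R. f l)"
    by (rule sum.mono_neutral_left) (use assms in auto)
  also have "\<dots> = (\<Sum>l=0..R. f l)"
  proof (rule sum.mono_neutral_right)
    show "\<forall>i\<in>{-1..R} - {0..R}. f i = 0"
    proof
      fix i
      assume "i \<in> {-1..R} - {0..R}"
      then have "i = -1"
        by auto
      with assms(1) show "f i = 0"
        by simp
    qed
  qed auto
  finally show ?thesis .
qed

lemma sum_atLeastAtMost_of_nat:
  "(\<Sum>l=0..M. f (int l)) = (\<Sum>l=0..int M. f l)"
proof -
  have "{0..int M} = int ` {0..M}"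
    by (simp add: image_int_atLeastAtMost)
  then show ?thesis
    by (simp add: sum.reindex)
qed

lemma three_term_recurrence_unique:
  fixes u v :: "nat \<Rightarrow> 'a::ring"
  assumes "u 0 = v 0"
    and u: "\<And>m. u (Suc m) = a m * u m - b m * u (m - 1)"
    and v: "\<And>m. v (Suc m) = a m * v m - b m * v (m - 1)"
  shows "u m = v m"
proof (induction m rule: less_induct)
  case (less m)
  show ?case
  proof (cases m)
    case (Suc m')
    then have "u m' = v m'" "u (m' - 1) = v (m' - 1)"
      using less.IH by simp_all
    then show ?thesis
      using Suc u v by simp
  qed (use assms(1) in simp)
qed

lemma qpoch_0 [simp]: "qpoch a q 0 = 1"
  by (simp add: qpoch_def)

lemma qpoch_Suc: "qpoch q q (Suc j) = qpoch q q j * (1 - q ^ Suc j)"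
  by (simp add: qpoch_def)

lemma prod_neg_qpow:
  fixes y q :: "'a::comm_ring_1"
  shows "(\<Prod>j<k. - y * q ^ j) = (-1) ^ k * y ^ k * q ^ (k choose 2)"
proof (induction k)
  case (Suc k)
  have "Suc k choose 2 = k + (k choose 2)"
    by (simp add: numeral_2_eq_2)
  with Suc show ?case
    by (simp add: power_add)
qed (simp add: numeral_2_eq_2)

definition inv_qpoch :: "complex \<Rightarrow> int \<Rightarrow> complex" where
  "inv_qpoch q j = (if j < 0 then 0 else inverse (qpoch q q (nat j)))"

lemma inv_qpoch_neg [simp]: "j < 0 \<Longrightarrow> inv_qpoch q j = 0"
  by (simp add: inv_qpoch_def)

lemma inv_qpoch_of_nat: "inv_qpoch q (int j) = inverse (qpoch q q j)"
  by (simp add: inv_qpoch_def)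

lemma qbinom_eq_inv_qpoch:
  "qbinom q N k = qpoch q q N * inv_qpoch q (int k) * inv_qpoch q (int N - int k)"
  by (simp add: qbinom_def inv_qpoch_def divide_inverse of_nat_diff nat_diff_distrib)

lemma Pq_0 [simp]: "Pq q 0 x y = 1"
  by (simp add: Pq_def)

lemma Pq_Suc: "Pq q (Suc k) x y = Pq q k x y * (x - q ^ k * y)"
  by (simp add: Pq_def)

lemma hq_0: "hq q 0 x y = 1"
  by (simp add: hq_def qbinom_def)

lemma hq_eq_sum_atMost:
  assumes "N \<le> R"
  shows "hq q N x y = (\<Sum>k\<le>R. qbinom q N k * Pq q k x y)"
proof -
  have "hq q N x y = (\<Sum>k\<le>N. qbinom q N k * Pq q k x y)"
    by (simp add: hq_def atLeast0AtMost)
  also have "\<dots> = (\<Sum>k\<le>R. qbinom q N k * Pq q k x y)"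
    by (rule sum.mono_neutral_left) (use assms in \<open>auto simp: qbinom_def\<close>)
  finally show ?thesis .
qed

locale q_not_root_of_unity =
  fixes q :: complex
  assumes qpow_ne_1: "q ^ Suc j \<noteq> 1"
begin

lemma qpoch_nonzero: "qpoch q q j \<noteq> 0"
  using qpow_ne_1 by (induction j) (simp_all add: qpoch_Suc)

lemma inv_qpoch_step:
  assumes "i + 1 = j"
  shows "inv_qpoch q i = (1 - q ^ nat j) * inv_qpoch q j"
proof (cases "j \<le> 0")
  case False
  then have "nat j = Suc (nat i)"
    using assms by simp
  then show ?thesis
    using assms qpow_ne_1[of "nat i"] qpoch_nonzero[of "nat i"]
    by (simp add: inv_qpoch_def qpoch_Suc del: power_Suc)
qed (use assms in \<open>cases "j = 0"; simp\<close>)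

lemma qbinom_Suc_Suc:
  "qbinom q (Suc N) (Suc k) = qbinom q N (Suc k) + q ^ (N - k) * qbinom q N k"
proof (cases "k \<le> N")
  case True
  have shift_N: "inv_qpoch q (int N - int (Suc k)) = (1 - q ^ (N - k)) * inv_qpoch q (int N - int k)"
    using inv_qpoch_step[of "int N - int (Suc k)" "int N - int k"] True
    by (simp add: nat_minus_as_int)
  have shift_k: "inv_qpoch q (int k) = (1 - q ^ Suc k) * inv_qpoch q (int (Suc k))"
    using inv_qpoch_step[of "int k" "int (Suc k)"] by (simp add: nat_add_distrib)
  have diff: "int (Suc N) - int (Suc k) = int N - int k"
    by simp
  have "q ^ (N - k) * q ^ Suc k = q ^ Suc N"
    using True by (simp flip: power_add)
  then have split: "1 - q ^ Suc N = (1 - q ^ (N - k)) + q ^ (N - k) * (1 - q ^ Suc k)"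
    by (simp add: algebra_simps)
  show ?thesis
    unfolding qbinom_eq_inv_qpoch qpoch_Suc shift_N shift_k diff split
    by (simp add: algebra_simps)
qed (simp add: qbinom_def)

lemma qbinom_absorb:
  assumes "j \<le> N"
  shows "(1 - q ^ (N - j)) * qbinom q N j = (1 - q ^ N) * qbinom q (N - 1) j"
proof (cases N)
  case (Suc M)
  have "inv_qpoch q (int M - int j) = (1 - q ^ (N - j)) * inv_qpoch q (int N - int j)"
    using inv_qpoch_step[of "int M - int j" "int N - int j"] Suc assms by (simp add: nat_minus_as_int)
  then show ?thesis
    using Suc by (simp add: qbinom_eq_inv_qpoch qpoch_Suc)
qed (use assms in simp)

lemma qbinom_0 [simp]: "qbinom q N 0 = 1"
  using qpoch_nonzero[of N] by (simp add: qbinom_def)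

lemma hq_Suc:
  "hq q (Suc N) x y = (1 + x - y * q ^ N) * hq q N x y - x * (1 - q ^ N) * hq q (N - 1) x y"
proof -
  let ?b = "qbinom q" and ?P = "\<lambda>k. Pq q k x y"
  have absorbed: "(\<Sum>k\<le>N. q ^ (N - k) * ?b N k * ?P k) = hq q N x y - (1 - q ^ N) * hq q (N - 1) x y"
  proof -
    have "(\<Sum>k\<le>N. (1 - q ^ (N - k)) * ?b N k * ?P k) = (\<Sum>k\<le>N. (1 - q ^ N) * (?b (N - 1) k * ?P k))"
      by (rule sum.cong) (auto simp: qbinom_absorb)
    also have "\<dots> = (1 - q ^ N) * hq q (N - 1) x y"
      unfolding hq_eq_sum_atMost[of "N - 1" N, OF diff_le_self] sum_distrib_left ..
    finally show ?thesis
      by (simp add: hq_eq_sum_atMost[of N N] algebra_simps sum_subtractf)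
  qed
  have "hq q (Suc N) x y = ?b (Suc N) 0 * ?P 0 + (\<Sum>k\<le>N. ?b (Suc N) (Suc k) * ?P (Suc k))"
    by (simp add: hq_eq_sum_atMost[of "Suc N" "Suc N"] sum.atMost_Suc_shift del: sum.atMost_Suc)
  also have "\<dots> = (?b N 0 * ?P 0 + (\<Sum>k\<le>N. ?b N (Suc k) * ?P (Suc k)))
      + (\<Sum>k\<le>N. q ^ (N - k) * ?b N k * ?P (Suc k))"
    by (simp add: qbinom_Suc_Suc distrib_right sum.distrib)
  also have "?b N 0 * ?P 0 + (\<Sum>k\<le>N. ?b N (Suc k) * ?P (Suc k)) = hq q N x y"
    by (simp add: hq_eq_sum_atMost[of N "Suc N"] sum.atMost_Suc_shift del: sum.atMost_Suc)
  also have "(\<Sum>k\<le>N. q ^ (N - k) * ?b N k * ?P (Suc k))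
      = x * (\<Sum>k\<le>N. q ^ (N - k) * ?b N k * ?P k) - y * q ^ N * hq q N x y"
  proof -
    have "q ^ (N - k) * ?b N k * ?P (Suc k) = x * (q ^ (N - k) * ?b N k * ?P k) - y * q ^ N * (?b N k * ?P k)"
      if "k \<le> N" for k
    proof -
      have "q ^ (N - k) * q ^ k = q ^ N"
        using that by (simp flip: power_add)
      then show ?thesis
        by (simp add: Pq_Suc algebra_simps)
    qed
    then show ?thesis
      by (simp add: hq_eq_sum_atMost[of N N] sum_subtractf sum_distrib_left)
  qed
  finally show ?thesis
    unfolding absorbed by (simp add: algebra_simps)
qed

lemma qbinom_mult_qbinom_diff:
  "qbinom q m l * qbinom q (m - l) k
     = qpoch q q m * inv_qpoch q (int l) * inv_qpoch q (int k) * inv_qpoch q (int m - int l - int k)"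
proof (cases "l \<le> m")
  case True
  then have "qpoch q q (m - l) * inv_qpoch q (int m - int l) = 1"
    using qpoch_nonzero[of "m - l"] by (simp add: inv_qpoch_def nat_diff_distrib)
  then show ?thesis
    using True by (simp add: qbinom_eq_inv_qpoch of_nat_diff algebra_simps)
qed (simp add: qbinom_def)

end

lemma lin_coeff_identity:
  fixes q y g :: "'a::comm_ring_1"
  assumes "Suc m = L + K + a"
  defines "e \<equiv> \<lambda>K. \<Prod>j<K. - y * q ^ j"
  shows "(1 - q ^ Suc m) * (g * e K * (1 - q ^ b))
    = g * e K * (1 - q ^ a) * (1 - q ^ b) + (1 - q ^ (a + b + K)) * (g * (1 - q ^ L) * e K)
      + (q ^ (a + b + K - 1) - q ^ m) * (g * y * e (K - 1) * (1 - q ^ K))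
      - g * (1 - q ^ L) * (1 - q ^ a) * e K"
proof (cases K)
  case 0
  then have "q ^ Suc m = q ^ L * q ^ a"
    using assms(1) by (simp flip: power_add)
  then show ?thesis
    using 0 by (simp add: algebra_simps power_add)
next
  case (Suc K')
  then have "q ^ m = q ^ L * q ^ K' * q ^ a"
    using assms(1) by (simp flip: power_add)
  then show ?thesis
    using Suc by (simp add: e_def algebra_simps power_add)
qed

text \<open>The coefficient of \<open>h_(n+m-2l-k)\<close> in the product formula, divided by \<open>(q;q)_m (q;q)_n\<close>.\<close>

definition lin_coeff :: "complex \<Rightarrow> complex \<Rightarrow> complex \<Rightarrow> nat \<Rightarrow> int \<Rightarrow> int \<Rightarrow> int \<Rightarrow> complex" where
  "lin_coeff q x y n m l k = x ^ nat l * (\<Prod>j<nat k. - y * q ^ j)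
     * inv_qpoch q l * inv_qpoch q k * inv_qpoch q (m - l - k) * inv_qpoch q (int n - l - k)"

lemma lin_coeff_nonzeroD:
  assumes "lin_coeff q x y n m l k \<noteq> 0"
  shows "0 \<le> l \<and> 0 \<le> k \<and> l + k \<le> m \<and> l + k \<le> int n"
  using assms by (auto simp: lin_coeff_def inv_qpoch_def split: if_splits)

text \<open>The box is one larger than the support \<open>l + k \<le> n\<close>, so shifting \<open>l\<close> or \<open>k\<close> by one loses no terms.\<close>

definition lin_sum :: "complex \<Rightarrow> complex \<Rightarrow> complex \<Rightarrow> nat \<Rightarrow> int \<Rightarrow> complex" where
  "lin_sum q x y n m = (\<Sum>l=0..int n + 1. \<Sum>k=0..int n + 1.
     lin_coeff q x y n m l k * hq q (nat (int n + m - 2 * l - k)) x y)"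

lemma lin_sum_minus_one: "lin_sum q x y n (-1) = 0"
proof -
  have "lin_coeff q x y n (-1) l k = 0" for l k
    using lin_coeff_nonzeroD[of q x y n "-1" l k] by linarith
  then show ?thesis
    by (simp add: lin_sum_def)
qed

context q_not_root_of_unity
begin

lemma lin_coeff_Suc_nonneg:
  assumes m: "Suc m = L + K + a" and n: "Suc n = L + K + b"
  shows "(1 - q ^ Suc m) * lin_coeff q x y n (int m + 1) (int L) (int K) =
     lin_coeff q x y n (int m) (int L) (int K)
   + x * (1 - q ^ nat (int n + int m - 2 * (int L - 1) - int K)) * lin_coeff q x y n (int m) (int L - 1) (int K)
   + y * (q ^ nat (int n + int m - 2 * int L - (int K - 1)) - q ^ m) * lin_coeff q x y n (int m) (int L) (int K - 1)
   - x * lin_coeff q x y n (int m - 1) (int L - 1) (int K)"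
proof -
  let ?W = "inv_qpoch q" and ?e = "\<lambda>K. \<Prod>j<K. - y * q ^ j"
  let ?G = "?W (int L) * ?W (int K) * ?W (int a) * ?W (int b)"
  have shifts: "?W (int a - 1) = (1 - q ^ a) * ?W (int a)" "?W (int b - 1) = (1 - q ^ b) * ?W (int b)"
    "?W (int L - 1) = (1 - q ^ L) * ?W (int L)" "?W (int K - 1) = (1 - q ^ K) * ?W (int K)"
    using inv_qpoch_step[of "int a - 1" "int a"] inv_qpoch_step[of "int b - 1" "int b"]
      inv_qpoch_step[of "int L - 1" "int L"] inv_qpoch_step[of "int K - 1" "int K"]
    by simp_all
  have args: "int m + 1 - int L - int K = int a" "int m - int L - int K = int a - 1"
    "int n - int L - int K = int b - 1" "int m - (int L - 1) - int K = int a"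
    "int n - (int L - 1) - int K = int b" "int m - int L - (int K - 1) = int a"
    "int n - int L - (int K - 1) = int b" "int m - 1 - (int L - 1) - int K = int a - 1"
    using m n by simp_all
  have exps: "nat (int n + int m - 2 * (int L - 1) - int K) = a + b + K"
    "nat (int n + int m - 2 * int L - (int K - 1)) = a + b + K - 1"
    using m n by simp_all
  have c1: "lin_coeff q x y n (int m + 1) (int L) (int K) = x ^ L * ?G * ?e K * (1 - q ^ b)"
    unfolding lin_coeff_def args shifts by (simp add: ac_simps)
  have c2: "lin_coeff q x y n (int m) (int L) (int K) = x ^ L * ?G * ?e K * (1 - q ^ a) * (1 - q ^ b)"
    unfolding lin_coeff_def args shifts by (simp add: ac_simps)
  have c3: "x * (1 - q ^ (a + b + K)) * lin_coeff q x y n (int m) (int L - 1) (int K)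
      = (1 - q ^ (a + b + K)) * (x ^ L * ?G * (1 - q ^ L) * ?e K)"
    unfolding lin_coeff_def args shifts by (cases L) (simp_all add: ac_simps nat_add_distrib)
  have c4: "y * (q ^ (a + b + K - 1) - q ^ m) * lin_coeff q x y n (int m) (int L) (int K - 1)
      = (q ^ (a + b + K - 1) - q ^ m) * (x ^ L * ?G * y * ?e (K - 1) * (1 - q ^ K))"
  proof -
    have "nat (int K - 1) = K - 1"
      by simp
    then show ?thesis
      unfolding lin_coeff_def args shifts by (simp add: ac_simps)
  qed
  have c5: "x * lin_coeff q x y n (int m - 1) (int L - 1) (int K) = x ^ L * ?G * (1 - q ^ L) * (1 - q ^ a) * ?e K"
    unfolding lin_coeff_def args shifts by (cases L) (simp_all add: ac_simps nat_add_distrib)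
  show ?thesis
    unfolding exps c1 c2 c3 c4 c5 by (rule lin_coeff_identity[OF m])
qed

lemma lin_coeff_Suc:
  "(1 - q ^ Suc m) * lin_coeff q x y n (int m + 1) l k =
     lin_coeff q x y n (int m) l k
   + x * (1 - q ^ nat (int n + int m - 2 * (l - 1) - k)) * lin_coeff q x y n (int m) (l - 1) k
   + y * (q ^ nat (int n + int m - 2 * l - (k - 1)) - q ^ m) * lin_coeff q x y n (int m) l (k - 1)
   - x * lin_coeff q x y n (int m - 1) (l - 1) k"
proof (cases "0 \<le> l \<and> 0 \<le> k \<and> l + k \<le> int m + 1 \<and> l + k \<le> int n + 1")
  case True
  then obtain L K where LK: "l = int L" "k = int K"
    by (metis nonneg_int_cases)
  with True have "Suc m = L + K + nat (int m + 1 - l - k)" "Suc n = L + K + nat (int n + 1 - l - k)"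
    by (simp_all, linarith+)
  from lin_coeff_Suc_nonneg[OF this] show ?thesis
    unfolding LK .
next
  case False
  then show ?thesis
    by (auto simp: lin_coeff_def)
qed

lemma lin_coeff_Suc_mult_hq:
  "(1 - q ^ Suc m) * lin_coeff q x y n (int m + 1) l k * hq q (nat (int n + (int m + 1) - 2 * l - k)) x y
   = lin_coeff q x y n (int m) l k * hq q (Suc (nat (int n + int m - 2 * l - k))) x y
   + x * (1 - q ^ nat (int n + int m - 2 * (l - 1) - k)) * lin_coeff q x y n (int m) (l - 1) k
       * hq q (nat (int n + int m - 2 * (l - 1) - k) - 1) x y
   + y * (q ^ nat (int n + int m - 2 * l - (k - 1)) - q ^ m) * lin_coeff q x y n (int m) l (k - 1)
       * hq q (nat (int n + int m - 2 * l - (k - 1))) x y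
   - x * lin_coeff q x y n (int m - 1) (l - 1) k * hq q (nat (int n + (int m - 1) - 2 * (l - 1) - k)) x y"
proof -
  define M where "M = nat (int n + (int m + 1) - 2 * l - k)"
  have up: "lin_coeff q x y n (int m) l k * hq q (Suc (nat (int n + int m - 2 * l - k))) x y
      = lin_coeff q x y n (int m) l k * hq q M x y"
  proof (cases "lin_coeff q x y n (int m) l k = 0")
    case False
    then have "Suc (nat (int n + int m - 2 * l - k)) = M"
      using lin_coeff_nonzeroD[OF False] unfolding M_def by arith
    then show ?thesis
      by simp
  qed simp
  have indices: "nat (int n + int m - 2 * (l - 1) - k) - 1 = M"
    "nat (int n + int m - 2 * l - (k - 1)) = M"
    "nat (int n + (int m - 1) - 2 * (l - 1) - k) = M"
    by (simp_all add: M_def algebra_simps)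
  show ?thesis
    unfolding lin_coeff_Suc up indices M_def[symmetric] by (simp add: ring_distribs)
qed

lemma lin_sum_Suc:
  "(1 - q ^ Suc m) * lin_sum q x y n (int m + 1)
     = (1 + x - y * q ^ m) * lin_sum q x y n (int m) - x * lin_sum q x y n (int m - 1)"
proof -
  let ?c = "lin_coeff q x y n" and ?h = "\<lambda>j. hq q j x y" and ?R = "int n + 1"
  define N where "N l k = nat (int n + int m - 2 * l - k)" for l k
  define up where "up l k = ?c (int m) l k * ?h (Suc (N l k))" for l k
  define down where "down l k = x * (1 - q ^ N l k) * ?c (int m) l k * ?h (N l k - 1)" for l k
  define same where "same l k = y * (q ^ N l k - q ^ m) * ?c (int m) l k * ?h (N l k)" for l k
  define prev where "prev l k = x * ?c (int m - 1) l k * ?h (nat (int n + (int m - 1) - 2 * l - k))" for l k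
  have split: "(1 + x - y * q ^ m) * (?c (int m) l k * ?h (N l k)) = up l k + down l k + same l k" for l k
    unfolding up_def down_def same_def hq_Suc by (simp add: algebra_simps)
  have "(1 + x - y * q ^ m) * lin_sum q x y n (int m)
      = (\<Sum>l=0..?R. \<Sum>k=0..?R. up l k) + (\<Sum>l=0..?R. \<Sum>k=0..?R. down l k)
        + (\<Sum>l=0..?R. \<Sum>k=0..?R. same l k)"
    unfolding lin_sum_def N_def[symmetric] sum_distrib_left split sum.distrib ..
  also have "(\<Sum>l=0..?R. \<Sum>k=0..?R. down l k) = (\<Sum>l=0..?R. \<Sum>k=0..?R. down (l - 1) k)"
    by (rule sum_int_shift_pred[symmetric]) (simp_all add: down_def lin_coeff_def)
  also have "(\<Sum>l=0..?R. \<Sum>k=0..?R. same l k) = (\<Sum>l=0..?R. \<Sum>k=0..?R. same l (k - 1))"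
    by (intro sum.cong refl sum_int_shift_pred[symmetric]) (simp_all add: same_def lin_coeff_def)
  finally have lhs: "(1 + x - y * q ^ m) * lin_sum q x y n (int m)
      = (\<Sum>l=0..?R. \<Sum>k=0..?R. up l k + down (l - 1) k + same l (k - 1))"
    by (simp add: sum.distrib)
  have "x * lin_sum q x y n (int m - 1) = (\<Sum>l=0..?R. \<Sum>k=0..?R. prev l k)"
    unfolding lin_sum_def prev_def sum_distrib_left by (simp add: mult.assoc)
  also have "\<dots> = (\<Sum>l=0..?R. \<Sum>k=0..?R. prev (l - 1) k)"
    by (rule sum_int_shift_pred[symmetric]) (simp_all add: prev_def lin_coeff_def)
  finally have rhs: "x * lin_sum q x y n (int m - 1) = (\<Sum>l=0..?R. \<Sum>k=0..?R. prev (l - 1) k)" .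
  have "(1 - q ^ Suc m) * lin_sum q x y n (int m + 1)
      = (\<Sum>l=0..?R. \<Sum>k=0..?R. up l k + down (l - 1) k + same l (k - 1) - prev (l - 1) k)"
    unfolding lin_sum_def sum_distrib_left mult.assoc[symmetric] lin_coeff_Suc_mult_hq
    unfolding up_def down_def same_def prev_def N_def ..
  then show ?thesis
    unfolding lhs rhs by (simp add: sum_subtractf)
qed

lemma lin_sum_0: "qpoch q q n * lin_sum q x y n 0 = hq q n x y"
proof -
  have "lin_coeff q x y n 0 l k * hq q (nat (int n - 2 * l - k)) x y
      = (if k = 0 then if l = 0 then inverse (qpoch q q n) * hq q n x y else 0 else 0)" for l k
  proof (cases "l = 0 \<and> k = 0")
    case False
    have "lin_coeff q x y n 0 l k = 0"
    proof (rule ccontr)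
      assume "lin_coeff q x y n 0 l k \<noteq> 0"
      from lin_coeff_nonzeroD[OF this] False show False
        by linarith
    qed
    with False show ?thesis
      by auto
  qed (simp add: lin_coeff_def inv_qpoch_def)
  then show ?thesis
    using qpoch_nonzero[of n] by (simp add: lin_sum_def)
qed

lemma hq_mult_hq_eq_lin_sum:
  "hq q n x y * hq q m x y = qpoch q q m * qpoch q q n * lin_sum q x y n (int m)"
proof (rule three_term_recurrence_unique)
  fix m
  show "hq q n x y * hq q (Suc m) x y
      = (1 + x - y * q ^ m) * (hq q n x y * hq q m x y) - x * (1 - q ^ m) * (hq q n x y * hq q (m - 1) x y)"
    by (simp add: hq_Suc algebra_simps)
  have prev: "qpoch q q m * lin_sum q x y n (int m - 1) = (1 - q ^ m) * qpoch q q (m - 1) * lin_sum q x y n (int (m - 1))"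
    by (cases m) (simp_all add: lin_sum_minus_one qpoch_Suc)
  have "qpoch q q (Suc m) * qpoch q q n * lin_sum q x y n (int (Suc m))
      = qpoch q q m * qpoch q q n * ((1 - q ^ Suc m) * lin_sum q x y n (int m + 1))"
    by (simp add: qpoch_Suc ac_simps)
  also have "\<dots> = (1 + x - y * q ^ m) * (qpoch q q m * qpoch q q n * lin_sum q x y n (int m))
      - x * qpoch q q n * (qpoch q q m * lin_sum q x y n (int m - 1))"
    unfolding lin_sum_Suc by (simp add: algebra_simps)
  finally show "qpoch q q (Suc m) * qpoch q q n * lin_sum q x y n (int (Suc m))
      = (1 + x - y * q ^ m) * (qpoch q q m * qpoch q q n * lin_sum q x y n (int m))
        - x * (1 - q ^ m) * (qpoch q q (m - 1) * qpoch q q n * lin_sum q x y n (int (m - 1)))"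
    unfolding prev by (simp add: ac_simps)
qed (simp add: lin_sum_0 hq_0)

lemma product_formula_summand:
  "qbinom q m l * qbinom q n l * qbinom q (m - l) k * qbinom q (n - l) k
     * qpoch q q k * qpoch q q l * (-1) ^ k * x ^ l * y ^ k * q ^ (k choose 2)
     * hq q (n + m - 2 * l - k) x y
   = qpoch q q m * qpoch q q n
     * (lin_coeff q x y n (int m) (int l) (int k) * hq q (nat (int n + int m - 2 * int l - int k)) x y)"
proof -
  have "qbinom q m l * qbinom q n l * qbinom q (m - l) k * qbinom q (n - l) k
      * qpoch q q k * qpoch q q l * (-1) ^ k * x ^ l * y ^ k * q ^ (k choose 2)
    = (qbinom q m l * qbinom q (m - l) k) * (qbinom q n l * qbinom q (n - l) k)
      * qpoch q q k * qpoch q q l * x ^ l * (\<Prod>j<k. - y * q ^ j)"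
    unfolding prod_neg_qpow by (simp add: ac_simps)
  also have "\<dots> = qpoch q q m * qpoch q q n * lin_coeff q x y n (int m) (int l) (int k)"
    using qpoch_nonzero[of k] qpoch_nonzero[of l]
    by (simp add: qbinom_mult_qbinom_diff lin_coeff_def inv_qpoch_of_nat field_simps)
  finally have coeff: "qbinom q m l * qbinom q n l * qbinom q (m - l) k * qbinom q (n - l) k
      * qpoch q q k * qpoch q q l * (-1) ^ k * x ^ l * y ^ k * q ^ (k choose 2)
    = qpoch q q m * qpoch q q n * lin_coeff q x y n (int m) (int l) (int k)" .
  show ?thesis
  proof (cases "lin_coeff q x y n (int m) (int l) (int k) = 0")
    case False
    then have "n + m - 2 * l - k = nat (int n + int m - 2 * int l - int k)"
      using lin_coeff_nonzeroD[OF False] by linarith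
    then show ?thesis
      by (simp add: coeff)
  qed (simp add: coeff)
qed

lemma hq_mult_hq:
  "hq q n x y * hq q m x y =
    (\<Sum>l=0..min m n. \<Sum>k=0..min m n.
       qbinom q m l * qbinom q n l * qbinom q (m - l) k * qbinom q (n - l) k
       * qpoch q q k * qpoch q q l * (-1) ^ k * x ^ l * y ^ k * q ^ (k choose 2)
       * hq q (n + m - 2 * l - k) x y)"
proof -
  define g where "g l k = lin_coeff q x y n (int m) l k * hq q (nat (int n + int m - 2 * l - k)) x y" for l k
  have support: "l \<le> int (min m n) \<and> k \<le> int (min m n)" if "g l k \<noteq> 0" for l k
    using that lin_coeff_nonzeroD[of q x y n "int m" l k] by (auto simp: g_def)
  have "(\<Sum>l=0..min m n. \<Sum>k=0..min m n. g (int l) (int k)) = (\<Sum>l=0..min m n. \<Sum>k=0..int (min m n). g (int l) k)"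
    by (simp add: sum_atLeastAtMost_of_nat)
  also have "\<dots> = (\<Sum>(l, k)\<in>{0..int (min m n)} \<times> {0..int (min m n)}. g l k)"
    using sum_atLeastAtMost_of_nat[of "\<lambda>l. \<Sum>k=0..int (min m n). g l k" "min m n"]
    by (simp add: sum.cartesian_product)
  also have "\<dots> = (\<Sum>(l, k)\<in>{0..int n + 1} \<times> {0..int n + 1}. g l k)"
    by (rule sum.mono_neutral_left) (use support in auto)
  also have "\<dots> = lin_sum q x y n (int m)"
    by (simp add: lin_sum_def g_def sum.cartesian_product)
  finally have "(\<Sum>l=0..min m n. \<Sum>k=0..min m n. g (int l) (int k)) = lin_sum q x y n (int m)" .
  then show ?thesis
    unfolding product_formula_summand g_def[symmetric] sum_distrib_left[symmetric] hq_mult_hq_eq_lin_sum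
    by simp
qed

end

lemma q_not_root_of_unity_if_norm_less_1:
  assumes "norm q < 1"
  shows "q_not_root_of_unity q"
proof
  fix j
  have "norm (q ^ Suc j) < 1"
    using assms by (simp add: norm_power power_less_one_iff del: power_Suc)
  then show "q ^ Suc j \<noteq> 1"
    by auto
qed

theorem corollary3p4:
  fixes q x y :: complex and n m :: nat
  assumes "norm q < 1"
  shows "hq q n x y * hq q m x y =
    (\<Sum>l=0..min m n. \<Sum>k=0..min m n.
       qbinom q m l * qbinom q n l * qbinom q (m - l) k * qbinom q (n - l) k
       * qpoch q q k * qpoch q q l * (-1) ^ k * x ^ l * y ^ k * q ^ (k choose 2)
       * hq q (n + m - 2 * l - k) x y)"
proof -
  interpret q_not_root_of_unity q
    using assms by (rule q_not_root_of_unity_if_norm_less_1)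
  show ?thesis
    by (rule hq_mult_hq)
qed

end
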